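(* There are at least $2^{\aleph_0}$ many continuous injective maps $M(\mathbb R(x))\to M(\mathbb R(x,y))$, all of them compatible with restriction and having mutually disjoint images.
   Context: $\mathbb R(x,y)$ is the rational function field in two variables over $\mathbb R$. For a field $K$, $M(K)$ is the set of $\mathbb R$-places $K\to\mathbb R\cup\{\infty\}$, with topology generated by the subbasis $H'(b)=\{\zeta\in M(K)\mid \infty\ne\zeta(b)>0\}$, $b\in K$. A map $\iota:M(\mathbb R(x))\to M(\mathbb R(x,y))$ is compatible with restriction if $\iota(\zeta)|_{\mathbb R(x)}=\zeta$ for all $\zeta$. *)

theory Defs
  imports "HOL-Analysis.Analysis" "HOL-Computational_Algebra.Polynomial" "HOL-Computational_Algebra.Fraction_Field"
begin

text \<open>Values in R \<union> {\<infinity>} are modelled as real option, None standing for \<infinity>.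
  A place in the sense of Lang: zeta 1 = 1, and zeta(a+b) = zeta a + zeta b,
  zeta(ab) = zeta a * zeta b whenever the right-hand side is defined, with the
  conventions c + \<infinity> = \<infinity> (c finite), c * \<infinity> = \<infinity> (c \<noteq> 0),
  \<infinity> * \<infinity> = \<infinity>; \<infinity> + \<infinity> and 0 * \<infinity> are undefined.\<close>

definition is_R_place :: "('a::field \<Rightarrow> real option) \<Rightarrow> bool" where
  "is_R_place \<zeta> \<longleftrightarrow>
     \<zeta> 1 = Some 1 \<and>
     (\<forall>a b c d. \<zeta> a = Some c \<and> \<zeta> b = Some d \<longrightarrow>
        \<zeta> (a + b) = Some (c + d) \<and> \<zeta> (a * b) = Some (c * d)) \<and>
     (\<forall>a b c. \<zeta> a = None \<and> \<zeta> b = Some c \<longrightarrow>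
        \<zeta> (a + b) = None \<and> \<zeta> (b + a) = None \<and>
        (c \<noteq> 0 \<longrightarrow> \<zeta> (a * b) = None \<and> \<zeta> (b * a) = None)) \<and>
     (\<forall>a b. \<zeta> a = None \<and> \<zeta> b = None \<longrightarrow> \<zeta> (a * b) = None)"

definition M :: "('a::field \<Rightarrow> real option) set" where
  "M = {\<zeta>. is_R_place \<zeta>}"

definition H' :: "'a::field \<Rightarrow> ('a \<Rightarrow> real option) set" where
  "H' b = {\<zeta> \<in> M. \<zeta> b \<noteq> None \<and> the (\<zeta> b) > 0}"

definition M_top :: "('a::field \<Rightarrow> real option) topology" where
  "M_top = subtopology (topology_generated_by (range H')) M"

type_synonym Rx = "real poly fract"
type_synonym Rxy = "real poly fract poly fract"

definition incl_xy :: "Rx \<Rightarrow> Rxy" where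
  "incl_xy a = Fract [:a:] 1"

end

theory Submission
  imports Defs
begin

text \<open>For an element a of a field K, specialising y to a is a place of K(y) over K
  whose valuation ring consists of the rational functions regular at a. Composing it with an
  R-place \<zeta> of K gives an R-place of K(y) that restricts to \<zeta> on K; it lies in H'(b) exactly
  when \<zeta> lies in H'(b(a)), so the composite map is continuous, and it is injective because it
  restricts to \<zeta>. For K = R(x) and a = r a real constant, the composite sends y to \<zeta>(r), and
  an R-place of R(x) is finite and injective on the real constants, so the images for distinct
  r are disjoint.\<close>

section \<open>Elementary properties of R-places\<close>

context
  fixes \<zeta> :: "'a::field \<Rightarrow> real option"
  assumes place: "is_R_place \<zeta>"
begin

lemma R_place_one: "\<zeta> 1 = Some 1"
  using place unfolding is_R_place_def by blast

lemma R_place_add: "\<zeta> a = Some c \<Longrightarrow> \<zeta> b = Some d \<Longrightarrow> \<zeta> (a + b) = Some (c + d)"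
  using place unfolding is_R_place_def by blast

lemma R_place_mult: "\<zeta> a = Some c \<Longrightarrow> \<zeta> b = Some d \<Longrightarrow> \<zeta> (a * b) = Some (c * d)"
  using place unfolding is_R_place_def by blast

lemma R_place_add_infinite:
  "\<zeta> a = None \<Longrightarrow> \<zeta> b = Some c \<Longrightarrow> \<zeta> (a + b) = None \<and> \<zeta> (b + a) = None"
  using place unfolding is_R_place_def by blast

lemma R_place_mult_infinite:
  "\<zeta> a = None \<Longrightarrow> \<zeta> b = Some c \<Longrightarrow> c \<noteq> 0 \<Longrightarrow> \<zeta> (a * b) = None \<and> \<zeta> (b * a) = None"
  using place unfolding is_R_place_def by blast

lemma R_place_mult_infinite_infinite: "\<zeta> a = None \<Longrightarrow> \<zeta> b = None \<Longrightarrow> \<zeta> (a * b) = None"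
  using place unfolding is_R_place_def by blast

lemma R_place_zero: "\<zeta> 0 = Some 0"
proof (cases "\<zeta> 0")
  case None
  then have "\<zeta> (0 + 1) = None" using R_place_add_infinite R_place_one by blast
  then show ?thesis using R_place_one by simp
next
  case (Some c)
  then have "\<zeta> (0 + 0) = Some (c + c)" using R_place_add by blast
  then show ?thesis using Some by simp
qed

lemma R_place_uminus:
  assumes a: "\<zeta> a = Some c"
  shows "\<zeta> (- a) = Some (- c)"
proof (cases "\<zeta> (- a)")
  case None
  then have "\<zeta> (- a + a) = None" using R_place_add_infinite a by blast
  then show ?thesis using R_place_zero by simp
next
  case (Some e)
  then have "\<zeta> (a + - a) = Some (c + e)" using R_place_add a by blast
  then have "c + e = 0" using R_place_zero by simp
  then show ?thesis using Some by (simp add: eq_neg_iff_add_eq_0)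
qed

lemma R_place_inverse_infinite:
  assumes a: "\<zeta> a = None"
  shows "\<zeta> (inverse a) = Some 0"
proof -
  have "a \<noteq> 0" using a R_place_zero by auto
  then have inv: "a * inverse a = 1" by simp
  show ?thesis
  proof (cases "\<zeta> (inverse a)")
    case None
    then show ?thesis using R_place_mult_infinite_infinite[OF a None] inv R_place_one by simp
  next
    case (Some d)
    then show ?thesis
      using R_place_mult_infinite[OF a Some] inv R_place_one by (cases "d = 0") simp_all
  qed
qed

lemma R_place_inverse_finite:
  assumes b: "\<zeta> b = Some d" and "d \<noteq> 0"
  shows "\<zeta> (inverse b) = Some (inverse d)"
proof -
  have "b \<noteq> 0" using b \<open>d \<noteq> 0\<close> R_place_zero by auto
  then have inv: "b * inverse b = 1" by simp
  show ?thesis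
  proof (cases "\<zeta> (inverse b)")
    case None
    then show ?thesis
      using R_place_mult_infinite[OF None b \<open>d \<noteq> 0\<close>] inv R_place_one by (simp add: mult.commute)
  next
    case (Some f)
    then have "\<zeta> (b * inverse b) = Some (d * f)" using R_place_mult b by blast
    then have "d * f = 1" using inv R_place_one by simp
    then show ?thesis using Some \<open>d \<noteq> 0\<close> by (simp add: field_simps)
  qed
qed

lemma R_place_one_plus_square: "\<zeta> (1 + w * w) \<noteq> Some 0"
proof (cases "\<zeta> w")
  case None
  then have "\<zeta> (w * w) = None" using R_place_mult_infinite_infinite by blast
  then show ?thesis using R_place_add_infinite R_place_one by fastforce
next
  case (Some d)
  then have "\<zeta> (1 + w * w) = Some (1 + d * d)" using R_place_add R_place_mult R_place_one by blast
  moreover have "1 + d * d \<noteq> 0" by (smt (verit) zero_le_square)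
  ultimately show ?thesis by simp
qed

lemma R_place_of_nat: "\<zeta> (of_nat n) = Some (real n)"
proof (induction n)
  case 0
  then show ?case using R_place_zero by simp
next
  case (Suc n)
  then have "\<zeta> (1 + of_nat n) = Some (1 + real n)" using R_place_add R_place_one by blast
  then show ?case by simp
qed

end

text \<open>V is a valuation ring of the field and h its residue map into R.\<close>

lemma is_R_place_of_valuation_ring:
  fixes V :: "'a::field set" and h :: "'a \<Rightarrow> real"
  assumes one: "1 \<in> V" "h 1 = 1"
    and closed: "\<And>a b. a \<in> V \<Longrightarrow> b \<in> V \<Longrightarrow>
      a + b \<in> V \<and> a * b \<in> V \<and> h (a + b) = h a + h b \<and> h (a * b) = h a * h b"
    and uminus: "\<And>a. a \<in> V \<Longrightarrow> - a \<in> V"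
    and inverse_outside: "\<And>a. a \<notin> V \<Longrightarrow> inverse a \<in> V \<and> h (inverse a) = 0"
    and inverse_unit: "\<And>b. b \<in> V \<Longrightarrow> h b \<noteq> 0 \<Longrightarrow> inverse b \<in> V"
  shows "is_R_place (\<lambda>a. if a \<in> V then Some (h a) else None)"
proof -
  have zero: "0 \<in> V" using closed[OF one(1) uminus[OF one(1)]] by simp
  have h_zero: "h 0 = 0" using closed[OF zero zero] by simp
  have add_outside: "a + b \<notin> V \<and> b + a \<notin> V" if "a \<notin> V" "b \<in> V" for a b
  proof -
    have "a = (a + b) + - b" "a = (b + a) + - b" by simp_all
    then show ?thesis using that closed uminus by metis
  qed
  have mult_outside: "a * b \<notin> V \<and> b * a \<notin> V" if "a \<notin> V" "b \<in> V" "h b \<noteq> 0" for a b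
  proof -
    have "b \<noteq> 0" using that h_zero by auto
    then have "a = (a * b) * inverse b" "a = (b * a) * inverse b" by simp_all
    then show ?thesis using that closed inverse_unit by metis
  qed
  have mult_outside_outside: "a * b \<notin> V" if "a \<notin> V" "b \<notin> V" for a b
  proof
    assume ab: "a * b \<in> V"
    have "a \<noteq> 0" "b \<noteq> 0" using that zero by auto
    have inv: "inverse (a * b) \<in> V" "h (inverse (a * b)) = 0"
      using closed[of "inverse a" "inverse b"] inverse_outside[OF that(1)]
        inverse_outside[OF that(2)]
      by (auto simp: mult.commute)
    have "1 = (a * b) * inverse (a * b)" using \<open>a \<noteq> 0\<close> \<open>b \<noteq> 0\<close> by (simp add: field_simps)
    then have "h 1 = h (a * b) * 0" using closed[OF ab inv(1)] inv(2) by metis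
    then show False using one by simp
  qed
  show ?thesis unfolding is_R_place_def
    using one closed add_outside mult_outside mult_outside_outside by (auto split: if_splits)
qed

section \<open>Rational functions regular at a point\<close>

definition regular_at :: "'k::field \<Rightarrow> 'k poly fract set" where
  "regular_at a = {f. \<exists>p q. poly q a \<noteq> 0 \<and> f = Fract p q}"

definition eval_at :: "'k::field \<Rightarrow> 'k poly fract \<Rightarrow> 'k" where
  "eval_at a f = (THE v. \<exists>p q. poly q a \<noteq> 0 \<and> f = Fract p q \<and> v = poly p a / poly q a)"

lemma
  fixes a :: "'k::field"
  assumes "poly q a \<noteq> 0"
  shows Fract_regular_at: "Fract p q \<in> regular_at a"
    and eval_at_Fract: "eval_at a (Fract p q) = poly p a / poly q a"
proof -
  show "Fract p q \<in> regular_at a" using assms unfolding regular_at_def by blast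
  show "eval_at a (Fract p q) = poly p a / poly q a"
    unfolding eval_at_def
  proof (rule the_equality)
    fix v assume "\<exists>p' q'. poly q' a \<noteq> 0 \<and> Fract p q = Fract p' q' \<and> v = poly p' a / poly q' a"
    then obtain p' q' where q': "poly q' a \<noteq> 0"
      and eq: "Fract p q = Fract p' q'" and v: "v = poly p' a / poly q' a"
      by blast
    have "q \<noteq> 0" "q' \<noteq> 0" using assms q' by auto
    then have "p * q' = p' * q" using eq eq_fract(1) by blast
    then have "poly p a * poly q' a = poly p' a * poly q a" by (metis poly_mult)
    then show "v = poly p a / poly q a" using v q' assms by (simp add: frac_eq_eq)
  qed (use assms in blast)
qed

lemma regular_atE:
  assumes "f \<in> regular_at a"
  obtains p q where "poly q a \<noteq> 0" "f = Fract p q"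
  using assms unfolding regular_at_def by blast

lemma regular_at_const: "Fract [:c:] 1 \<in> regular_at a" "eval_at a (Fract [:c:] 1) = c"
  using Fract_regular_at[of 1 a "[:c:]"] eval_at_Fract[of 1 a "[:c:]"] by simp_all

lemma eval_at_variable: "Fract [:0, 1:] 1 \<in> regular_at a" "eval_at a (Fract [:0, 1:] 1) = a"
  using Fract_regular_at[of 1 a "[:0, 1:]"] eval_at_Fract[of 1 a "[:0, 1:]"] by simp_all

lemma regular_at_add:
  assumes "f \<in> regular_at a" "g \<in> regular_at a"
  shows "f + g \<in> regular_at a" "eval_at a (f + g) = eval_at a f + eval_at a g"
proof -
  obtain p q where f: "poly q a \<noteq> 0" "f = Fract p q" using assms(1) by (rule regular_atE)
  obtain p' q' where g: "poly q' a \<noteq> 0" "g = Fract p' q'" using assms(2) by (rule regular_atE)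
  have "q \<noteq> 0" "q' \<noteq> 0" using f g by auto
  then have sum: "f + g = Fract (p * q' + p' * q) (q * q')" using f g by simp
  have den: "poly (q * q') a \<noteq> 0" using f g by simp
  show "f + g \<in> regular_at a" using sum Fract_regular_at[OF den] by simp
  show "eval_at a (f + g) = eval_at a f + eval_at a g"
  proof -
    have "eval_at a (f + g) = poly (p * q' + p' * q) a / poly (q * q') a"
      using sum eval_at_Fract[OF den] by simp
    also have "\<dots> = poly p a / poly q a + poly p' a / poly q' a"
      using f(1) g(1) by (simp add: field_simps)
    finally show ?thesis using f g eval_at_Fract[OF f(1)] eval_at_Fract[OF g(1)] by simp
  qed
qed

lemma regular_at_mult:
  assumes "f \<in> regular_at a" "g \<in> regular_at a"
  shows "f * g \<in> regular_at a" "eval_at a (f * g) = eval_at a f * eval_at a g"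
proof -
  obtain p q where f: "poly q a \<noteq> 0" "f = Fract p q" using assms(1) by (rule regular_atE)
  obtain p' q' where g: "poly q' a \<noteq> 0" "g = Fract p' q'" using assms(2) by (rule regular_atE)
  have prod: "f * g = Fract (p * p') (q * q')" using f g by simp
  have den: "poly (q * q') a \<noteq> 0" using f g by simp
  show "f * g \<in> regular_at a" using prod Fract_regular_at[OF den] by simp
  show "eval_at a (f * g) = eval_at a f * eval_at a g"
    using f g prod eval_at_Fract[OF den] eval_at_Fract[OF f(1)] eval_at_Fract[OF g(1)] by simp
qed

lemma regular_at_uminus:
  assumes "f \<in> regular_at a"
  shows "- f \<in> regular_at a" "eval_at a (- f) = - eval_at a f"
proof -
  obtain p q where f: "poly q a \<noteq> 0" "f = Fract p q" using assms by (rule regular_atE)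
  then show "- f \<in> regular_at a" "eval_at a (- f) = - eval_at a f"
    using Fract_regular_at[OF f(1), of "- p"] eval_at_Fract[OF f(1)] by simp_all
qed

text \<open>Common factors y - a are cancelled until numerator or denominator no longer vanishes at a.\<close>

lemma Fract_reduce_at:
  fixes a :: "'k::field"
  assumes "q \<noteq> 0"
  shows "\<exists>p' q'. q' \<noteq> 0 \<and> Fract p q = Fract p' q' \<and>
    (poly q' a \<noteq> 0 \<or> poly p' a \<noteq> 0 \<or> p' = 0)"
  using assms
proof (induction "degree q" arbitrary: p q rule: less_induct)
  case less
  show ?case
  proof (cases "poly q a \<noteq> 0 \<or> poly p a \<noteq> 0 \<or> p = 0")
    case True
    then show ?thesis using less.prems by blast
  next
    case False
    then have "[:-a, 1:] dvd p" "[:-a, 1:] dvd q" by (auto simp: poly_eq_0_iff_dvd)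
    then obtain p1 q1 where pq: "p = [:-a, 1:] * p1" "q = [:-a, 1:] * q1" by (auto elim!: dvdE)
    have q1: "q1 \<noteq> 0" using pq less.prems by auto
    then have "degree q1 < degree q" using pq degree_mult_eq[of "[:-a, 1:]" q1] by simp
    from less.hyps[OF this q1, of p1] obtain p' q' where
      "q' \<noteq> 0" "Fract p1 q1 = Fract p' q'" "poly q' a \<noteq> 0 \<or> poly p' a \<noteq> 0 \<or> p' = 0"
      by blast
    moreover have "Fract p q = Fract p1 q1"
      unfolding pq by (rule mult_fract_cancel) simp
    ultimately show ?thesis by metis
  qed
qed

lemma inverse_regular_at_pole:
  fixes a :: "'k::field"
  assumes "f \<notin> regular_at a"
  shows "inverse f \<in> regular_at a" "eval_at a (inverse f) = 0"
proof -
  obtain p q where f: "f = Fract p q" "q \<noteq> 0" by (cases f)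
  from Fract_reduce_at[OF f(2), of p a] obtain p' q' where
    reduced: "q' \<noteq> 0" "Fract p q = Fract p' q'" "poly q' a \<noteq> 0 \<or> poly p' a \<noteq> 0 \<or> p' = 0"
    by blast
  have pole: "poly q' a = 0" using assms f reduced Fract_regular_at by metis
  have "p' \<noteq> 0"
  proof
    assume "p' = 0"
    then have "f = Fract 0 1" using f reduced eq_fract(3) by metis
    then show False using assms Fract_regular_at[of 1 a 0] by simp
  qed
  then have "poly p' a \<noteq> 0" using reduced pole by blast
  moreover have "inverse f = Fract q' p'" using f reduced by simp
  ultimately show "inverse f \<in> regular_at a" "eval_at a (inverse f) = 0"
    using Fract_regular_at[of p' a q'] eval_at_Fract[of p' a q'] pole by simp_all
qed

lemma inverse_regular_at:
  fixes a :: "'k::field"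
  assumes "f \<in> regular_at a" "eval_at a f \<noteq> 0"
  shows "inverse f \<in> regular_at a" "eval_at a (inverse f) = inverse (eval_at a f)"
proof -
  obtain p q where f: "poly q a \<noteq> 0" "f = Fract p q" using assms(1) by (rule regular_atE)
  have "poly p a \<noteq> 0" using assms(2) f eval_at_Fract by fastforce
  moreover have "inverse f = Fract q p" using f by simp
  ultimately show "inverse f \<in> regular_at a" "eval_at a (inverse f) = inverse (eval_at a f)"
    using Fract_regular_at[of p a q] eval_at_Fract[of p a q] eval_at_Fract[OF f(1)] f
    by simp_all
qed

section \<open>Specialising y to a and composing with a place\<close>

definition specialize_place :: "'k::field \<Rightarrow> ('k \<Rightarrow> real option) \<Rightarrow> 'k poly fract \<Rightarrow> real option"
  where "specialize_place a \<zeta> f = (if f \<in> regular_at a then \<zeta> (eval_at a f) else None)"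

lemma specialize_place_const: "specialize_place a \<zeta> (Fract [:c:] 1) = \<zeta> c"
  by (simp only: specialize_place_def regular_at_const if_True)

lemma specialize_place_variable: "specialize_place a \<zeta> (Fract [:0, 1:] 1) = \<zeta> a"
  by (simp only: specialize_place_def eval_at_variable if_True)

lemma is_R_place_specialize_place:
  fixes a :: "'k::field"
  assumes place: "is_R_place \<zeta>"
  shows "is_R_place (specialize_place a \<zeta>)"
proof -
  define V where "V = {f \<in> regular_at a. \<zeta> (eval_at a f) \<noteq> None}"
  define h where "h f = the (\<zeta> (eval_at a f))" for f
  have V_h: "specialize_place a \<zeta> = (\<lambda>f. if f \<in> V then Some (h f) else None)"
    by (auto simp: specialize_place_def V_def h_def fun_eq_iff)
  have h: "\<zeta> (eval_at a f) = Some (h f)" if "f \<in> V" for f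
    using that unfolding V_def h_def by auto
  have "is_R_place (\<lambda>f. if f \<in> V then Some (h f) else None)"
  proof (rule is_R_place_of_valuation_ring)
    have "eval_at a 1 = 1" "1 \<in> regular_at a"
      using eval_at_Fract[of 1 a 1] Fract_regular_at[of 1 a 1] by (simp_all add: One_fract_def)
    then show "1 \<in> V" "h 1 = 1" using R_place_one[OF place] by (simp_all add: V_def h_def)
  next
    fix f g assume "f \<in> V" "g \<in> V"
    then show "f + g \<in> V \<and> f * g \<in> V \<and> h (f + g) = h f + h g \<and> h (f * g) = h f * h g"
      using regular_at_add[of f a g] regular_at_mult[of f a g]
        R_place_add[OF place h h] R_place_mult[OF place h h]
      by (simp add: V_def h_def)
  next
    fix f assume "f \<in> V"
    then show "- f \<in> V"
      using regular_at_uminus[of f a] R_place_uminus[OF place h] by (simp add: V_def)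
  next
    fix f assume f: "f \<notin> V"
    show "inverse f \<in> V \<and> h (inverse f) = 0"
    proof (cases "f \<in> regular_at a")
      case False
      then show ?thesis
        using inverse_regular_at_pole[OF False] R_place_zero[OF place] by (simp add: V_def h_def)
    next
      case True
      then have infinite: "\<zeta> (eval_at a f) = None" using f by (simp add: V_def)
      then have "eval_at a f \<noteq> 0" using R_place_zero[OF place] by auto
      then show ?thesis
        using inverse_regular_at[OF True] R_place_inverse_infinite[OF place infinite]
        by (simp add: V_def h_def)
    qed
  next
    fix f assume f: "f \<in> V" "h f \<noteq> 0"
    then have "eval_at a f \<noteq> 0" using h R_place_zero[OF place] by force
    then show "inverse f \<in> V"
      using inverse_regular_at[of f a] R_place_inverse_finite[OF place h[OF f(1)] f(2)] f(1)
      by (simp add: V_def)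
  qed
  then show ?thesis using V_h by simp
qed

lemma specialize_place_eqD:
  assumes "specialize_place a \<zeta> = specialize_place b \<zeta>'"
  shows "\<zeta> = \<zeta>'" "\<zeta> a = \<zeta> b"
proof -
  show "\<zeta> = \<zeta>'"
    using assms specialize_place_const by (metis ext)
  then show "\<zeta> a = \<zeta> b"
    using assms specialize_place_variable by metis
qed

section \<open>The topology on the space of R-places\<close>

lemma in_H'_one: "\<zeta> \<in> M \<Longrightarrow> \<zeta> \<in> H' 1"
  using R_place_one[of \<zeta>] by (simp add: M_def H'_def)

lemma topspace_M_top: "topspace (M_top :: ('a::field \<Rightarrow> real option) topology) = M"
proof -
  have "\<Union> (range (H' :: 'a \<Rightarrow> _)) = M"
    using in_H'_one by (auto simp: H'_def)
  then show ?thesis unfolding M_top_def by simp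
qed

lemma openin_M_top_H': "openin M_top (H' (b :: 'a::field))"
proof -
  have "H' b = H' b \<inter> M" by (auto simp: H'_def)
  moreover have "openin (topology_generated_by (range H')) (H' b)"
    by (rule topology_generated_by_Basis) simp
  ultimately show ?thesis unfolding M_top_def openin_subtopology by blast
qed

lemma continuous_map_M_topI:
  fixes f :: "('a::field \<Rightarrow> real option) \<Rightarrow> ('b::field \<Rightarrow> real option)"
  assumes maps: "f ` M \<subseteq> M"
    and preimage: "\<And>b. openin M_top {\<zeta> \<in> M. f \<zeta> \<in> H' b}"
  shows "continuous_map M_top M_top f"
proof -
  have "continuous_map M_top (topology_generated_by (range H')) f"
  proof (rule continuous_on_generated_topo)
    fix U assume "U \<in> range (H' :: 'b \<Rightarrow> _)"
    then obtain b where "U = H' b" by blast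
    then have "f -` U \<inter> topspace M_top = {\<zeta> \<in> M. f \<zeta> \<in> H' b}"
      by (auto simp: topspace_M_top)
    then show "openin M_top (f -` U \<inter> topspace M_top)" using preimage by simp
  next
    show "f ` topspace M_top \<subseteq> \<Union> (range H')"
      using maps in_H'_one by (auto simp: topspace_M_top)
  qed
  then show ?thesis
    unfolding M_top_def[where 'a='b] using maps
    by (intro continuous_map_into_subtopology) (auto simp: topspace_M_top)
qed

lemma specialize_place_M: "\<zeta> \<in> M \<Longrightarrow> specialize_place a \<zeta> \<in> M"
  using is_R_place_specialize_place by (auto simp: M_def)

lemma continuous_map_specialize_place:
  "continuous_map M_top M_top (specialize_place (a :: 'k::field))"
proof (rule continuous_map_M_topI)
  show "specialize_place a ` M \<subseteq> M" using specialize_place_M by blast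
next
  fix b
  have "{\<zeta> \<in> M. specialize_place a \<zeta> \<in> H' b} = (if b \<in> regular_at a then H' (eval_at a b) else {})"
    using specialize_place_M by (auto simp: H'_def specialize_place_def)
  then show "openin M_top {\<zeta> \<in> M. specialize_place a \<zeta> \<in> H' b}"
    by (simp add: openin_M_top_H')
qed

section \<open>Real constants of R(x)\<close>

definition real_const :: "real \<Rightarrow> Rx" where
  "real_const t = Fract [:t:] 1"

lemma real_const_add: "real_const t + real_const u = real_const (t + u)"
  by (simp add: real_const_def)

lemma real_const_mult: "real_const t * real_const u = real_const (t * u)"
  by (simp add: real_const_def mult.commute)

lemma real_const_of_nat: "real_const (real n) = of_nat n"
  by (simp add: real_const_def of_nat_fract of_nat_poly)

text \<open>If \<zeta>(t) were infinite, choose n \<ge> t * t and w = sqrt(n - t * t); then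
  1 + (w/t) * (w/t) = n * (1/t) * (1/t) would be sent to 0.\<close>

lemma R_place_real_const_finite:
  assumes place: "is_R_place (\<zeta> :: Rx \<Rightarrow> real option)"
  shows "\<zeta> (real_const t) \<noteq> None"
proof
  assume infinite: "\<zeta> (real_const t) = None"
  obtain n :: nat where n: "t * t \<le> real n" using real_arch_simple by blast
  define w where "w = sqrt (real n - t * t)"
  have w: "w * w = real n - t * t" using n unfolding w_def by simp
  define v where "v = real_const t"
  define z where "z = real_const w * inverse v"
  have "v \<noteq> 0" using infinite R_place_zero[OF place] v_def by auto
  then have "1 + z * z = (v * v + real_const w * real_const w) * (inverse v * inverse v)"
    unfolding z_def by (simp add: field_simps)
  also have "\<dots> = of_nat n * (inverse v * inverse v)"
    unfolding v_def real_const_mult real_const_add w real_const_of_nat[symmetric] by simp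
  finally have "\<zeta> (1 + z * z) = Some (real n * (0 * 0))"
    using R_place_mult[OF place] R_place_of_nat[OF place]
      R_place_inverse_infinite[OF place infinite] v_def
    by metis
  then show False using R_place_one_plus_square[OF place] by simp
qed

lemma R_place_real_const_inj:
  assumes place: "is_R_place (\<zeta> :: Rx \<Rightarrow> real option)"
    and eq: "\<zeta> (real_const r) = \<zeta> (real_const s)"
  shows "r = s"
proof (rule ccontr)
  assume "r \<noteq> s"
  obtain e where e: "\<zeta> (real_const s) = Some e"
    using R_place_real_const_finite[OF place] by blast
  have "\<zeta> (real_const r + - real_const s) = Some (e + - e)"
    using R_place_add[OF place] R_place_uminus[OF place e] eq e by metis
  then have diff: "\<zeta> (real_const (r - s)) = Some 0"
    by (simp add: real_const_add real_const_def)
  obtain d where d: "\<zeta> (real_const (1 / (r - s))) = Some d"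
    using R_place_real_const_finite[OF place] by blast
  have "real_const (r - s) * real_const (1 / (r - s)) = 1"
    using \<open>r \<noteq> s\<close> by (simp add: real_const_mult real_const_def One_fract_def one_pCons)
  then show False
    using R_place_mult[OF place diff d] R_place_one[OF place] by simp
qed

theorem corollary9p3:
  "\<exists>\<iota> :: real \<Rightarrow> (Rx \<Rightarrow> real option) \<Rightarrow> (Rxy \<Rightarrow> real option).
     (\<forall>r. continuous_map M_top M_top (\<iota> r) \<and> inj_on (\<iota> r) M \<and>
          (\<forall>\<zeta>\<in>M. \<iota> r \<zeta> \<circ> incl_xy = \<zeta>)) \<and>
     (\<forall>r s. r \<noteq> s \<longrightarrow> \<iota> r ` M \<inter> \<iota> s ` M = {})"
proof (intro exI[of _ "\<lambda>r. specialize_place (real_const r)"] conjI allI impI)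
  have restrict: "specialize_place a \<zeta> \<circ> incl_xy = \<zeta>" for a \<zeta>
    by (simp add: fun_eq_iff incl_xy_def specialize_place_const)
  fix r
  show "continuous_map M_top M_top (specialize_place (real_const r))"
    by (rule continuous_map_specialize_place)
  show "\<forall>\<zeta>\<in>M. specialize_place (real_const r) \<zeta> \<circ> incl_xy = \<zeta>"
    using restrict by blast
  show "inj_on (specialize_place (real_const r)) M"
    by (metis inj_onI restrict)
  fix s :: real assume "r \<noteq> s"
  have "\<zeta> (real_const r) \<noteq> \<zeta> (real_const s)" if "\<zeta> \<in> M" for \<zeta>
    using R_place_real_const_inj \<open>r \<noteq> s\<close> that by (auto simp: M_def)
  then show "specialize_place (real_const r) ` M \<inter> specialize_place (real_const s) ` M = {}"
    using specialize_place_eqD by blast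
qed

end
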